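(* Let $\xi\in C^2(\mathbb S^1;\mathbb R^d)$ and $\sigma\in C^1(\mathbb S^1;\mathbb R)$ satisfy $\partial_s(\sigma\partial_s\xi)+\xi=0$ and $|\partial_s\xi|=1$ on $\mathbb S^1$. Let $\tau:=\sigma^2$ and $\bar\tau:=\int_0^1\tau^{1/2}\,ds$. Then $\tau$ satisfies the first integral $$\tfrac12(\partial_s\tau)^2+V(\tau)=\lambda,\qquad V(\tau):=4\tau^{3/2}-6\bar\tau\,\tau,$$ where $\lambda=V(\tau_e)$ for any extreme value $\tau_e$ of $\tau$. Moreover $\lambda\in[-2\bar\tau^3,0)$.
   Context: $\mathbb S^1=\mathbb R/\mathbb Z$, $d\ge2$. *)

theory Defs
  imports "HOL-Analysis.Analysis"
begin

text \<open>S^1 = R/Z: functions on S^1 are represented as 1-periodic functions on the reals.\<close>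

definition periodic1 :: "(real \<Rightarrow> 'a) \<Rightarrow> bool" where
  "periodic1 f \<longleftrightarrow> (\<forall>s. f (s + 1) = f s)"

definition Vpot :: "real \<Rightarrow> real \<Rightarrow> real" where
  "Vpot taubar t = 4 * t powr (3/2) - 6 * taubar * t"

end

theory Submission
  imports Defs
begin

text \<open>
  Expanding the equation as \<open>\<sigma>' \<xi>' + \<sigma> \<xi>'' = -\<xi>\<close> and pairing it with \<open>\<xi>'\<close> and \<open>\<xi>''\<close>
  (which are orthogonal since \<open>|\<xi>'| = 1\<close>) gives \<open>\<sigma>' = -\<xi>\<cdot>\<xi>'\<close> and
  \<open>\<sigma>'' = -1 + \<sigma> |\<xi>''|\<^sup>2\<close>. Hence \<open>|\<xi>|\<^sup>2 + 2\<sigma> = c\<close> is constant and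
  \<open>\<sigma>\<^sup>2 |\<xi>''|\<^sup>2 = c - 2\<sigma> - \<sigma>'\<^sup>2\<close>, which makes
  \<open>E = 2\<sigma>\<^sup>2\<sigma>'\<^sup>2 + 4\<sigma>\<^sup>3 - 2c\<sigma>\<^sup>2 = -2\<sigma>\<^sup>4|\<xi>''|\<^sup>2\<close> a conserved quantity; in terms of
  \<open>\<tau> = \<sigma>\<^sup>2\<close> it reads \<open>\<tau>'\<^sup>2/2 + 4 \<tau> powr (3/2) - 2c\<tau>\<close>.
  Periodicity of \<open>\<sigma>'\<close> forces \<open>\<sigma> |\<xi>''|\<^sup>2 = 1\<close> somewhere, so \<open>E < 0\<close>; thus \<open>\<sigma>\<close> never
  vanishes and is positive. Integrating \<open>(\<sigma>\<sigma>')' = c - 3\<sigma>\<close> over a period gives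
  \<open>taubar = \<integral>\<sigma> = c/3\<close>, and \<open>-2 taubar\<^sup>3\<close> is the minimum of \<open>V\<close> on \<open>\<tau> \<ge> 0\<close>.
\<close>

lemma has_real_derivative_inner:
  fixes f g :: "real \<Rightarrow> 'a::real_inner"
  assumes "(f has_vector_derivative f') (at x)" "(g has_vector_derivative g') (at x)"
  shows "((\<lambda>x. f x \<bullet> g x) has_real_derivative (f x \<bullet> g' + f' \<bullet> g x)) (at x)"
  using bounded_bilinear.has_vector_derivative[OF bounded_bilinear_inner assms]
  by (simp add: has_real_derivative_iff_has_vector_derivative)

lemma unit_speed_orthogonal:
  fixes f' f'' :: "real \<Rightarrow> 'a::real_inner"
  assumes unit: "\<And>s. norm (f' s) = 1"
    and deriv: "\<And>s. (f' has_vector_derivative f'' s) (at s)"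
  shows "f' s \<bullet> f'' s = 0"
proof -
  have "((\<lambda>t. f' t \<bullet> f' t) has_real_derivative (f' s \<bullet> f'' s + f'' s \<bullet> f' s)) (at s)"
    by (rule has_real_derivative_inner[OF deriv deriv])
  moreover have "(\<lambda>t. f' t \<bullet> f' t) = (\<lambda>t. 1)"
    using unit norm_eq_1 by blast
  ultimately have "((\<lambda>t. 1) has_real_derivative (f' s \<bullet> f'' s + f'' s \<bullet> f' s)) (at s)"
    by simp
  then have "f' s \<bullet> f'' s + f'' s \<bullet> f' s = 0"
    using DERIV_const DERIV_unique by blast
  then show ?thesis by (simp add: inner_commute)
qed

lemma periodic1_has_vector_derivative:
  fixes f :: "real \<Rightarrow> 'a::real_normed_vector"
  assumes per: "periodic1 f" and deriv: "\<And>s. (f has_vector_derivative f' s) (at s)"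
  shows "periodic1 f'"
  unfolding periodic1_def
proof
  fix s
  have shift: "((\<lambda>t. t + 1) has_vector_derivative 1) (at s)"
    by (auto intro!: derivative_eq_intros)
  have "((f \<circ> (\<lambda>t. t + 1)) has_vector_derivative (1 *\<^sub>R f' (s + 1))) (at s)"
    by (rule vector_diff_chain_at[OF shift]) (simp add: deriv)
  moreover have "f \<circ> (\<lambda>t. t + 1) = f"
    using per by (auto simp: periodic1_def o_def)
  ultimately have "(f has_vector_derivative f' (s + 1)) (at s)" by simp
  then show "f' (s + 1) = f' s"
    using deriv vector_derivative_unique_at by blast
qed

lemma periodic1_deriv_has_zero:
  fixes f :: "real \<Rightarrow> real"
  assumes "periodic1 f" and "\<And>s. (f has_real_derivative f' s) (at s)"
  obtains x where "f' x = 0"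
proof -
  obtain x where "f 1 - f 0 = (1 - 0) * f' x"
    using MVT2[of 0 1 f f'] assms(2) by auto
  moreover have "f 1 = f 0"
    using assms(1) unfolding periodic1_def by (metis add_0_left)
  ultimately show ?thesis using that by simp
qed

lemma periodic1_deriv_integral_zero:
  fixes f :: "real \<Rightarrow> real"
  assumes "periodic1 f" and "\<And>s. (f has_real_derivative f' s) (at s)"
  shows "(f' has_integral 0) {0..1}"
proof -
  have "(f' has_integral (f 1 - f 0)) {0..1}"
    by (rule fundamental_theorem_of_calculus)
       (auto intro: has_field_derivative_at_within assms(2)
             simp: has_real_derivative_iff_has_vector_derivative[symmetric])
  moreover have "f 1 = f 0"
    using assms(1) unfolding periodic1_def by (metis add_0_left)
  ultimately show ?thesis by simp
qed

lemma nonvanishing_pos_everywhere: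
  fixes f :: "real \<Rightarrow> real"
  assumes cont: "continuous_on UNIV f" and nz: "\<And>s. f s \<noteq> 0" and "f x > 0"
  shows "f s > 0"
proof (rule ccontr)
  assume "\<not> f s > 0"
  with nz have neg: "f s < 0" by (meson linorder_neqE_linordered_idom)
  have "\<exists>z. f z = 0"
  proof (cases "s \<le> x")
    case True
    then show ?thesis
      using IVT'[of f s 0 x] neg \<open>f x > 0\<close> continuous_on_subset[OF cont] by auto
  next
    case False
    then show ?thesis
      using IVT2'[of f s 0 x] neg \<open>f x > 0\<close> continuous_on_subset[OF cont] by auto
  qed
  then show False using nz by blast
qed

lemma power2_powr_three_halves:
  fixes x :: real
  assumes "x > 0"
  shows "(x\<^sup>2) powr (3/2) = x ^ 3"
proof -
  have "(x\<^sup>2) powr (3/2) = (x powr 2) powr (3/2)" using assms by (simp add: powr_realpow)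
  also have "\<dots> = x powr 3" by (simp add: powr_powr)
  also have "\<dots> = x ^ 3" using assms by (simp add: powr_realpow)
  finally show ?thesis .
qed

lemma Vpot_ge:
  assumes "0 \<le> a" "0 \<le> t"
  shows "- 2 * a ^ 3 \<le> Vpot a t"
proof (cases "t = 0")
  case True
  then show ?thesis using assms by (simp add: Vpot_def)
next
  case False
  define y where "y = sqrt t"
  have y: "y > 0" "t = y\<^sup>2"
    using assms False by (auto simp: y_def)
  have "Vpot a t = 4 * y ^ 3 - 6 * a * y\<^sup>2"
    using y by (simp add: Vpot_def power2_powr_three_halves)
  also have "\<dots> = 2 * (y - a)\<^sup>2 * (2 * y + a) - 2 * a ^ 3"
    by (simp add: power2_eq_square power3_eq_cube algebra_simps)
  finally show ?thesis
    using y assms by simp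
qed

locale tension_curve =
  fixes \<xi> \<xi>' \<xi>'' :: "real \<Rightarrow> 'a::real_inner"
    and \<sigma> \<sigma>' :: "real \<Rightarrow> real"
  assumes xi_deriv: "\<And>s. (\<xi> has_vector_derivative \<xi>' s) (at s)"
    and xi'_deriv: "\<And>s. (\<xi>' has_vector_derivative \<xi>'' s) (at s)"
    and sigma_deriv: "\<And>s. (\<sigma> has_real_derivative \<sigma>' s) (at s)"
    and balance: "\<And>s. ((\<lambda>t. \<sigma> t *\<^sub>R \<xi>' t) has_vector_derivative (- \<xi> s)) (at s)"
    and unit_speed: "\<And>s. norm (\<xi>' s) = 1"
begin

definition curv2 :: "real \<Rightarrow> real" where
  "curv2 s = \<xi>'' s \<bullet> \<xi>'' s"

definition c :: real where
  "c = \<xi> 0 \<bullet> \<xi> 0 + 2 * \<sigma> 0"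

definition energy :: "real \<Rightarrow> real" where
  "energy s = 2 * (\<sigma> s)\<^sup>2 * (\<sigma>' s)\<^sup>2 + 4 * (\<sigma> s) ^ 3 - 2 * c * (\<sigma> s)\<^sup>2"

lemma curv2_nonneg: "curv2 s \<ge> 0"
  by (simp add: curv2_def)

lemma tangent_unit: "\<xi>' s \<bullet> \<xi>' s = 1"
  using unit_speed norm_eq_1 by blast

lemma tangent_orthogonal: "\<xi>' s \<bullet> \<xi>'' s = 0"
  using unit_speed_orthogonal[OF unit_speed xi'_deriv] .

lemma balance_expanded: "\<sigma>' s *\<^sub>R \<xi>' s + \<sigma> s *\<^sub>R \<xi>'' s = - \<xi> s"
proof -
  have "((\<lambda>t. \<sigma> t *\<^sub>R \<xi>' t) has_vector_derivative (\<sigma> s *\<^sub>R \<xi>'' s + \<sigma>' s *\<^sub>R \<xi>' s)) (at s)"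
    by (rule has_vector_derivative_scaleR[OF sigma_deriv xi'_deriv])
  then show ?thesis
    using balance vector_derivative_unique_at by (metis add.commute)
qed

lemma sigma'_eq: "\<sigma>' s = - (\<xi> s \<bullet> \<xi>' s)"
proof -
  have "(\<sigma>' s *\<^sub>R \<xi>' s + \<sigma> s *\<^sub>R \<xi>'' s) \<bullet> \<xi>' s = - \<xi> s \<bullet> \<xi>' s"
    using balance_expanded by simp
  then show ?thesis
    using tangent_unit[of s] tangent_orthogonal[of s]
    by (simp add: inner_add_left inner_add_right inner_commute)
qed

lemma sigma_curv2: "\<sigma> s * curv2 s = - (\<xi> s \<bullet> \<xi>'' s)"
proof -
  have "(\<sigma>' s *\<^sub>R \<xi>' s + \<sigma> s *\<^sub>R \<xi>'' s) \<bullet> \<xi>'' s = - \<xi> s \<bullet> \<xi>'' s"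
    using balance_expanded by simp
  then show ?thesis
    using tangent_orthogonal[of s] by (simp add: curv2_def inner_add_left)
qed

lemma norm_tension_const: "\<xi> s \<bullet> \<xi> s + 2 * \<sigma> s = c"
proof -
  have "((\<lambda>t. \<xi> t \<bullet> \<xi> t + 2 * \<sigma> t) has_real_derivative 0) (at s)" for s
  proof -
    have "((\<lambda>t. \<xi> t \<bullet> \<xi> t + 2 * \<sigma> t) has_real_derivative
            ((\<xi> s \<bullet> \<xi>' s + \<xi>' s \<bullet> \<xi> s) + 2 * \<sigma>' s)) (at s)"
      by (intro DERIV_add has_real_derivative_inner xi_deriv DERIV_cmult sigma_deriv)
    then show ?thesis using sigma'_eq[of s] by (simp add: inner_commute)
  qed
  then show ?thesis
    unfolding c_def using DERIV_isconst_all by blast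
qed

lemma sigma'_deriv: "(\<sigma>' has_real_derivative (-1 + \<sigma> s * curv2 s)) (at s)"
proof -
  have "((\<lambda>t. - (\<xi> t \<bullet> \<xi>' t)) has_real_derivative - (\<xi> s \<bullet> \<xi>'' s + \<xi>' s \<bullet> \<xi>' s)) (at s)"
    by (intro DERIV_minus has_real_derivative_inner xi_deriv xi'_deriv)
  moreover have "- (\<xi> s \<bullet> \<xi>'' s + \<xi>' s \<bullet> \<xi>' s) = -1 + \<sigma> s * curv2 s"
    using tangent_unit[of s] sigma_curv2[of s] by simp
  moreover have "\<sigma>' = (\<lambda>t. - (\<xi> t \<bullet> \<xi>' t))"
    using sigma'_eq by auto
  ultimately show ?thesis by simp
qed

lemma sigma_sq_curv2: "(\<sigma> s)\<^sup>2 * curv2 s = c - 2 * \<sigma> s - (\<sigma>' s)\<^sup>2"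
proof -
  have normal: "\<sigma> s *\<^sub>R \<xi>'' s = - \<xi> s - \<sigma>' s *\<^sub>R \<xi>' s"
    using balance_expanded[of s] by (simp add: algebra_simps)
  have "(\<sigma> s)\<^sup>2 * curv2 s = (\<sigma> s *\<^sub>R \<xi>'' s) \<bullet> (\<sigma> s *\<^sub>R \<xi>'' s)"
    by (simp add: curv2_def power2_eq_square)
  also have "\<dots> = (- \<xi> s - \<sigma>' s *\<^sub>R \<xi>' s) \<bullet> (- \<xi> s - \<sigma>' s *\<^sub>R \<xi>' s)"
    by (simp only: normal)
  also have "\<dots> = \<xi> s \<bullet> \<xi> s + 2 * \<sigma>' s * (\<xi> s \<bullet> \<xi>' s) + (\<sigma>' s)\<^sup>2 * (\<xi>' s \<bullet> \<xi>' s)"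
    by (simp add: inner_diff_left inner_diff_right inner_commute power2_eq_square algebra_simps)
  also have "\<dots> = c - 2 * \<sigma> s - (\<sigma>' s)\<^sup>2"
    using norm_tension_const[of s] sigma'_eq[of s] tangent_unit[of s]
    by (simp add: power2_eq_square algebra_simps)
  finally show ?thesis .
qed

lemma energy_curv2_form: "energy s = - 2 * (\<sigma> s)\<^sup>2 * ((\<sigma> s)\<^sup>2 * curv2 s)"
  unfolding energy_def sigma_sq_curv2
  by (simp add: power2_eq_square power3_eq_cube algebra_simps)

lemma energy_const: "energy s = energy 0"
proof -
  have "(energy has_real_derivative 0) (at s)" for s
  proof -
    have "(energy has_real_derivative
       (2 * (2 * \<sigma> s * \<sigma>' s) * (\<sigma>' s)\<^sup>2
        + 2 * (\<sigma> s)\<^sup>2 * (2 * \<sigma>' s * (-1 + \<sigma> s * curv2 s))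
        + 4 * (3 * (\<sigma> s)\<^sup>2 * \<sigma>' s) - 2 * c * (2 * \<sigma> s * \<sigma>' s))) (at s)"
      unfolding energy_def[abs_def]
      by (auto intro!: derivative_eq_intros sigma_deriv sigma'_deriv
               simp: power2_eq_square algebra_simps)
    moreover have "2 * (\<sigma> s)\<^sup>2 * (2 * \<sigma>' s * (-1 + \<sigma> s * curv2 s)) =
        -4 * (\<sigma> s)\<^sup>2 * \<sigma>' s + 4 * \<sigma> s * \<sigma>' s * ((\<sigma> s)\<^sup>2 * curv2 s)"
      by (simp add: power2_eq_square algebra_simps)
    ultimately show ?thesis
      unfolding sigma_sq_curv2 by (simp add: power2_eq_square power3_eq_cube algebra_simps)
  qed
  then show ?thesis using DERIV_isconst_all by blast
qed

lemma sigma_sigma'_deriv: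
  "((\<lambda>s. \<sigma> s * \<sigma>' s) has_real_derivative (c - 3 * \<sigma> s)) (at s)"
proof -
  have "((\<lambda>s. \<sigma> s * \<sigma>' s) has_real_derivative
          ((\<sigma>' s)\<^sup>2 - \<sigma> s + (\<sigma> s)\<^sup>2 * curv2 s)) (at s)"
    by (auto intro!: derivative_eq_intros sigma_deriv sigma'_deriv
             simp: power2_eq_square algebra_simps)
  then show ?thesis unfolding sigma_sq_curv2 by simp
qed

end

locale periodic_tension_curve = tension_curve +
  assumes xi_periodic: "periodic1 \<xi>"
    and sigma_periodic: "periodic1 \<sigma>"
begin

lemma sigma'_periodic: "periodic1 \<sigma>'"
  using periodic1_has_vector_derivative[OF xi_periodic xi_deriv] xi_periodic
  by (simp add: periodic1_def sigma'_eq)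

lemma sigma_curv2_eq_one:
  obtains x where "\<sigma> x * curv2 x = 1" "\<sigma> x > 0" "curv2 x > 0"
proof -
  obtain x where "-1 + \<sigma> x * curv2 x = 0"
    using periodic1_deriv_has_zero[OF sigma'_periodic sigma'_deriv] .
  then have x: "\<sigma> x * curv2 x = 1" by simp
  then have "0 < \<sigma> x * curv2 x" by simp
  then have "\<sigma> x > 0" "curv2 x > 0"
    using curv2_nonneg[of x] by (auto simp: zero_less_mult_iff)
  with x show ?thesis using that by blast
qed

lemma energy_neg: "energy 0 < 0"
proof -
  obtain x where "\<sigma> x > 0" "curv2 x > 0"
    using sigma_curv2_eq_one .
  then show ?thesis
    using energy_curv2_form[of x] energy_const[of x] by simp
qed

lemma sigma_pos: "\<sigma> s > 0"
proof -
  have nonzero: "\<sigma> t \<noteq> 0" for t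
    using energy_curv2_form[of t] energy_const[of t] energy_neg by auto
  have cont: "continuous_on UNIV \<sigma>"
    using sigma_deriv DERIV_continuous continuous_at_imp_continuous_on by blast
  obtain x where "\<sigma> x > 0"
    using sigma_curv2_eq_one .
  then show ?thesis
    using nonvanishing_pos_everywhere[OF cont nonzero] by blast
qed

lemma c_pos: "c > 0"
  using norm_tension_const[of 0] sigma_pos[of 0] by (metis add_nonneg_pos inner_ge_zero mult_pos_pos zero_less_numeral)

lemma sigma_integral: "(\<sigma> has_integral (c / 3)) {0..1}"
proof -
  have per: "periodic1 (\<lambda>s. \<sigma> s * \<sigma>' s)"
    using sigma_periodic sigma'_periodic by (simp add: periodic1_def)
  have "((\<lambda>s. c - 3 * \<sigma> s) has_integral 0) {0..1}"
    using periodic1_deriv_integral_zero[OF per sigma_sigma'_deriv] .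
  from has_integral_diff[OF has_integral_const_real[of c 0 1] this]
  have "((\<lambda>s. 3 * \<sigma> s) has_integral c) {0..1}" by simp
  from has_integral_cmul[OF this, of "1/3"] show ?thesis by simp
qed

lemma first_integral:
  "(1/2) * (deriv (\<lambda>s. (\<sigma> s)\<^sup>2) s)\<^sup>2 + Vpot (c / 3) ((\<sigma> s)\<^sup>2) = energy s"
proof -
  have "deriv (\<lambda>s. (\<sigma> s)\<^sup>2) s = 2 * \<sigma> s * \<sigma>' s"
    by (rule DERIV_imp_deriv) (auto intro!: derivative_eq_intros sigma_deriv)
  then show ?thesis
    using power2_powr_three_halves[OF sigma_pos[of s]]
    by (simp add: Vpot_def energy_def power2_eq_square algebra_simps)
qed

lemma energy_at_extremum:
  assumes "(\<forall>s. (\<sigma> s)\<^sup>2 \<le> (\<sigma> s0)\<^sup>2) \<or> (\<forall>s. (\<sigma> s0)\<^sup>2 \<le> (\<sigma> s)\<^sup>2)"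
  shows "energy s0 = Vpot (c / 3) ((\<sigma> s0)\<^sup>2)"
proof -
  have tau_deriv: "((\<lambda>s. (\<sigma> s)\<^sup>2) has_real_derivative deriv (\<lambda>s. (\<sigma> s)\<^sup>2) s0) (at s0)"
    by (rule DERIV_deriv_iff_real_differentiable[THEN iffD2])
       (auto intro!: derivative_eq_intros sigma_deriv simp: real_differentiable_def)
  have "deriv (\<lambda>s. (\<sigma> s)\<^sup>2) s0 = 0"
    using assms DERIV_local_max[OF tau_deriv, of 1] DERIV_local_min[OF tau_deriv, of 1] by auto
  then show ?thesis using first_integral[of s0] by simp
qed

lemma energy_lower_bound: "- 2 * (c / 3) ^ 3 \<le> energy 0"
proof -
  have "- 2 * (c / 3) ^ 3 \<le> Vpot (c / 3) ((\<sigma> 0)\<^sup>2)"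
    using c_pos by (intro Vpot_ge) auto
  also have "\<dots> \<le> energy 0"
    using first_integral[of 0] zero_le_power2[of "deriv (\<lambda>s. (\<sigma> s)\<^sup>2) 0"] by linarith
  finally show ?thesis .
qed

end

theorem proposition3p9:
  fixes \<xi> \<xi>' \<xi>'' :: "real \<Rightarrow> real ^ 'd"
    and \<sigma> \<sigma>' :: "real \<Rightarrow> real"
  assumes d2: "CARD('d) \<ge> 2"
    and per_xi: "periodic1 \<xi>"
    and per_sigma: "periodic1 \<sigma>"
    and xi_d1: "\<And>s. (\<xi> has_vector_derivative \<xi>' s) (at s)"
    and xi_d2: "\<And>s. (\<xi>' has_vector_derivative \<xi>'' s) (at s)"
    and xi_C2: "continuous_on UNIV \<xi>''"
    and sigma_d1: "\<And>s. (\<sigma> has_real_derivative \<sigma>' s) (at s)"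
    and sigma_C1: "continuous_on UNIV \<sigma>'"
    and eq: "\<And>s. ((\<lambda>t. \<sigma> t *\<^sub>R \<xi>' t) has_vector_derivative (- \<xi> s)) (at s)"
    and unit: "\<And>s. norm (\<xi>' s) = 1"
  shows "let \<tau> = (\<lambda>s. (\<sigma> s)\<^sup>2);
             taubar = integral {0..1} (\<lambda>s. sqrt (\<tau> s))
         in \<exists>lam::real.
              (\<forall>s. (1/2) * (deriv \<tau> s)\<^sup>2 + Vpot taubar (\<tau> s) = lam)
            \<and> (\<forall>s0. ((\<forall>s. \<tau> s \<le> \<tau> s0) \<or> (\<forall>s. \<tau> s0 \<le> \<tau> s))
                     \<longrightarrow> lam = Vpot taubar (\<tau> s0))
            \<and> - 2 * taubar ^ 3 \<le> lam \<and> lam < 0"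
proof -
  interpret periodic_tension_curve \<xi> \<xi>' \<xi>'' \<sigma> \<sigma>'
    by unfold_locales (fact xi_d1 xi_d2 sigma_d1 eq unit per_xi per_sigma)+
  have taubar: "integral {0..1} (\<lambda>s. sqrt ((\<sigma> s)\<^sup>2)) = c / 3"
    using integral_unique[OF sigma_integral] sigma_pos by (simp add: less_imp_le)
  show ?thesis
    unfolding Let_def taubar
    using first_integral energy_at_extremum energy_const energy_neg energy_lower_bound
    by metis
qed

end
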